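(* Let $n$ be even and $F_4(X)=X^{2^n-2}$ on $\mathbb{F}_{2^n}$. For $a,b\in\mathbb{F}_{2^n}^*$, $\mathrm{FBCT}_{F_4}(a,b)=2^n$ if $a=b$; $=4$ if $(a/b)^2+a/b+1=0$; and $=0$ otherwise.
   Context: For $F:\mathbb{F}_{2^n}\to\mathbb{F}_{2^n}$ and $a,b\in\mathbb{F}_{2^n}$, $\mathrm{FBCT}_F(a,b)=|\{X\in\mathbb{F}_{2^n}: F(X+a+b)+F(X+b)+F(X+a)+F(X)=0\}|$. *)

theory Defs
  imports Main
begin

definition FBCT :: "('a::{field,finite} \<Rightarrow> 'a) \<Rightarrow> 'a \<Rightarrow> 'a \<Rightarrow> nat" where
  "FBCT F a b = card {X. F (X + a + b) + F (X + b) + F (X + a) + F X = 0}"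

end

theory Submission
  imports Defs
begin

text \<open>
  In a finite field of characteristic 2 and order at least 3 the map \<open>X \<mapsto> X^(2^n-2)\<close> is
  \<open>X \<mapsto> inverse X\<close> (with \<open>inverse 0 = 0\<close>). For \<open>a = b\<close> the four terms cancel in pairs, so every
  \<open>X\<close> is a solution. For \<open>a \<noteq> b\<close>, clearing denominators shows that off the subspace
  \<open>{0, a, b, a + b}\<close> the boomerang sum times \<open>X(X+a)(X+b)(X+a+b)\<close> equals \<open>ab(a+b) \<noteq> 0\<close>, while on
  it the sum is the constant \<open>1/a + 1/b + 1/(a+b) = (a\<^sup>2+ab+b\<^sup>2)/(ab(a+b))\<close>. Hence there are
  either four solutions or none. The parity of \<open>n\<close> only serves to exclude \<open>n = 1\<close>.
\<close>

lemma of_nat_card_UNIV_eq_0: "of_nat (card (UNIV :: 'a set)) = (0 :: 'a :: {ring_1, finite})"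
proof -
  have "(\<Sum>y\<in>UNIV. y + (1 :: 'a)) = (\<Sum>y\<in>UNIV. y)"
    by (rule sum.reindex_bij_witness[where i = "\<lambda>y. y - 1" and j = "\<lambda>y. y + 1"]) auto
  then show ?thesis
    by (simp add: sum.distrib)
qed

lemma power_card_UNIV_minus_one:
  fixes x :: "'a :: {field, finite}"
  assumes "x \<noteq> 0"
  shows "x ^ (card (UNIV :: 'a set) - 1) = 1"
proof -
  have "(\<Prod>y\<in>UNIV - {0}. x * y) = (\<Prod>y\<in>UNIV - {0}. y)"
    by (rule prod.reindex_bij_witness[where i = "\<lambda>y. y / x" and j = "\<lambda>y. x * y"])
      (use assms in auto)
  then have "x ^ card (UNIV - {0 :: 'a}) * (\<Prod>y\<in>UNIV - {0}. y) = (\<Prod>y\<in>UNIV - {0}. y)"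
    by (simp add: prod.distrib)
  then show ?thesis
    by (simp add: card_Diff_singleton)
qed

lemma power_card_UNIV_minus_two_eq_inverse:
  fixes x :: "'a :: {field, finite}"
  assumes "card (UNIV :: 'a set) > 2"
  shows "x ^ (card (UNIV :: 'a set) - 2) = inverse x"
proof (cases "x = 0")
  case False
  have "card (UNIV :: 'a set) - 1 = Suc (card (UNIV :: 'a set) - 2)"
    using assms by linarith
  then have "x ^ (card (UNIV :: 'a set) - 2) * x = 1"
    using power_card_UNIV_minus_one[OF False] by (simp add: mult.commute)
  then show ?thesis
    using False by (simp add: field_simps)
qed (use assms in simp)

lemma char_2_add_self:
  assumes "(2 :: 'a :: ring_1) = 0"
  shows "x + x = (0 :: 'a)" and "x + (x + y) = y"
proof -
  show "x + x = 0"
    using assms by (metis mult_2 mult_zero_left)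
  then show "x + (x + y) = y"
    by (simp flip: add.assoc)
qed

lemma char_2_add_eq_0_iff:
  assumes "(2 :: 'a :: ring_1) = 0"
  shows "x + y = (0 :: 'a) \<longleftrightarrow> x = y"
  using char_2_add_self[OF assms] by (metis add_right_cancel)

lemma inverse_boomerang_sum_on_subspace:
  fixes a b X :: "'a :: field"
  assumes "(2 :: 'a) = 0" and "X \<in> {0, a, b, a + b}"
  shows "inverse (X + a + b) + inverse (X + b) + inverse (X + a) + inverse X
    = inverse a + inverse b + inverse (a + b)"
  using assms(2) by (auto simp: char_2_add_self[OF assms(1)] add_ac)

lemma inverse_boomerang_sum_off_subspace:
  fixes a b X :: "'a :: field"
  assumes "(2 :: 'a) = 0" and "X \<notin> {0, a, b, a + b}"
  shows "X * (X + a) * (X + b) * (X + a + b)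
      * (inverse (X + a + b) + inverse (X + b) + inverse (X + a) + inverse X)
    = a * b * (a + b)"
proof -
  have "X \<noteq> 0" "X + a \<noteq> 0" "X + b \<noteq> 0" "X + a + b \<noteq> 0"
    using assms(2) by (auto simp: char_2_add_eq_0_iff[OF assms(1)] add.assoc)
  then have "X * inverse X = 1" "(X + a) * inverse (X + a) = 1"
    "(X + b) * inverse (X + b) = 1" "(X + a + b) * inverse (X + a + b) = 1"
    by simp_all
  moreover define R where "R = 2 * X ^ 3 + 3 * (a + b) * X ^ 2 + (a * a + b * b + 3 * a * b) * X"
  ultimately have "X * (X + a) * (X + b) * (X + a + b)
      * (inverse (X + a + b) + inverse (X + b) + inverse (X + a) + inverse X)
    = a * b * (a + b) + (R + R)"
    by algebra
  then show ?thesis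
    using char_2_add_self[OF assms(1)] by simp
qed

lemma inverse_triple_sum_eq_0_iff:
  fixes a b :: "'a :: field"
  assumes "(2 :: 'a) = 0" and "a \<noteq> 0" "b \<noteq> 0" "a + b \<noteq> 0"
  shows "inverse a + inverse b + inverse (a + b) = 0 \<longleftrightarrow> a * a + a * b + b * b = 0"
proof -
  have "a * inverse a = 1" "b * inverse b = 1" "(a + b) * inverse (a + b) = 1"
    using assms(2-4) by simp_all
  then have "a * b * (a + b) * (inverse a + inverse b + inverse (a + b))
      = (a * a + a * b + b * b) + (a * b + a * b)"
    by algebra
  then show ?thesis
    using assms by (auto simp: char_2_add_self[OF assms(1)])
qed

theorem FBCT_inverse:
  fixes a b :: "'a :: {field, finite}"
  assumes char_2: "(2 :: 'a) = 0" and "a \<noteq> 0" "b \<noteq> 0"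
  shows "FBCT inverse a b =
    (if a = b then card (UNIV :: 'a set) else if a * a + a * b + b * b = 0 then 4 else 0)"
proof -
  define S where "S = {X :: 'a. inverse (X + a + b) + inverse (X + b) + inverse (X + a) + inverse X = 0}"
  have FBCT_eq: "FBCT inverse a b = card S"
    unfolding FBCT_def S_def ..
  show ?thesis
  proof (cases "a = b")
    case True
    then have "S = UNIV"
      by (auto simp: S_def char_2_add_self[OF char_2] add_ac)
    with True FBCT_eq show ?thesis
      by simp
  next
    case False
    then have "a + b \<noteq> 0"
      by (simp add: char_2_add_eq_0_iff[OF char_2])
    have off: "X \<notin> S" if "X \<notin> {0, a, b, a + b}" for X
      using inverse_boomerang_sum_off_subspace[OF char_2 that] assms(2,3) \<open>a + b \<noteq> 0\<close>
      by (auto simp: S_def)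
    have on: "X \<in> S \<longleftrightarrow> a * a + a * b + b * b = 0" if "X \<in> {0, a, b, a + b}" for X
      using inverse_boomerang_sum_on_subspace[OF char_2 that]
        inverse_triple_sum_eq_0_iff[OF char_2 assms(2,3) \<open>a + b \<noteq> 0\<close>]
      by (simp add: S_def)
    have "S = (if a * a + a * b + b * b = 0 then {0, a, b, a + b} else {})"
      using off on by auto
    moreover have "card {0, a, b, a + b} = 4"
      using assms(2,3) False \<open>a + b \<noteq> 0\<close> by (auto simp: char_2_add_self[OF char_2])
    ultimately show ?thesis
      using FBCT_eq False by simp
  qed
qed

theorem mainTheorem13:
  fixes a b :: "'a::{field,finite}" and n :: nat
  assumes "card (UNIV :: 'a set) = 2 ^ n" and "even n"
    and "a \<noteq> 0" and "b \<noteq> 0"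
  shows "FBCT (\<lambda>X. X ^ (2 ^ n - 2)) a b =
           (if a = b then 2 ^ n
            else if (a / b) ^ 2 + a / b + 1 = 0 then 4
            else 0)"
proof -
  have "(2 :: 'a) ^ n = 0"
    using of_nat_card_UNIV_eq_0[where 'a = 'a] assms(1) by simp
  then have char_2: "(2 :: 'a) = 0" and "n \<noteq> 0"
    by (auto simp: power_0_left split: if_splits)
  with assms(2) have "card (UNIV :: 'a set) > 2"
    using assms(1) power_strict_increasing[of 1 n "2 :: nat"] by (auto elim!: evenE)
  then have "(\<lambda>X :: 'a. X ^ (2 ^ n - 2)) = inverse"
    using assms(1) power_card_UNIV_minus_two_eq_inverse by fastforce
  moreover have "(a / b) ^ 2 + a / b + 1 = 0 \<longleftrightarrow> a * a + a * b + b * b = 0"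
    using assms(4) by (simp add: field_simps power2_eq_square)
  ultimately show ?thesis
    using FBCT_inverse[OF char_2 assms(3,4)] assms(1) by simp
qed

end
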